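(* Let $d\ge2$, $A\in\mathcal C^{d-1}$ and $C_1,C_2\in\mathcal C^d_A$. Then $$D_{A,1}(C_1,C_2)=\int_{\mathbb I}\big\|Q^\tau_{C_1}-Q^\tau_{C_2}\big\|_{A,1}\,\mathrm d\lambda(\tau)\le\tfrac12,$$ and the bound $\tfrac12$ is attained for some $C_1,C_2\in\mathcal C^d_A$.
   Context: $\mathbb I=[0,1]$, $\lambda$ Lebesgue measure. A $d$-copula $C\in\mathcal C^d$ is the distribution function on $\mathbb I^d$ of a probability measure $\mu_C$ with uniform univariate marginals; points are $(\mathbf x,y)$, $\mathbf x\in\mathbb I^{d-1}$. $C_{1:(d-1)}$ is the marginal copula of the first $d-1$ coordinates; $\mathcal C^d_A=\{C\in\mathcal C^d:C_{1:(d-1)}=A\}$ (for $d=2$, $\mu_A=\lambda$, $\mathcal C^2_A=\mathcal C^2$). $K_C$ is the Markov kernel of $C$ w.r.t. the first $d-1$ coordinates: $\mu_C(B\times F)=\int_B K_C(\mathbf x,F)\,\mathrm d\mu_{A}(\mathbf x)$ for $C\in\mathcal C^d_A$. $Q^\tau_C(\mathbf x)=\inf\{y\in\mathbb I: K_C(\mathbf x,[0,y])\ge\tau\}$. $\|f\|_{A,1}=\int|f|\,\mathrm d\mu_A$. $D_{A,1}(C_1,C_2)=\int_{\mathbb I}\int_{\mathbb I^{d-1}}|K_{C_1}(\mathbf x,[0,y])-K_{C_2}(\mathbf x,[0,y])|\,\mathrm d\mu_A(\mathbf x)\,\mathrm d\lambda(y)$. *)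

theory Defs
  imports "HOL-Probability.Probability"
begin

text \<open>Points of I^n are represented as (extensional) functions nat => real on
  the index set {..<n}; the ambient measurable space is the product space below.\<close>

definition cube_space :: "nat \<Rightarrow> (nat \<Rightarrow> real) measure" where
  "cube_space n = PiM {..<n} (\<lambda>_. borel)"

definition unif01 :: "real measure" where
  "unif01 = uniform_measure lborel {0..1}"

text \<open>An n-copula, represented by its probability measure mu_C on I^n
  (all univariate marginals uniform on I).\<close>
definition copula_measure :: "nat \<Rightarrow> (nat \<Rightarrow> real) measure \<Rightarrow> bool" where
  "copula_measure n \<mu> \<longleftrightarrow>
     sets \<mu> = sets (cube_space n) \<and> prob_space \<mu> \<and>
     (\<forall>i<n. distr \<mu> borel (\<lambda>x. x i) = unif01)"

text \<open>A d-copula in split coordinates (x,y), x in I^(d-1), y in I, whose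
  marginal copula of the first d-1 coordinates has measure mu_A, i.e. C in C^d_A.\<close>
definition copula_with_marginal ::
  "nat \<Rightarrow> (nat \<Rightarrow> real) measure \<Rightarrow> ((nat \<Rightarrow> real) \<times> real) measure \<Rightarrow> bool" where
  "copula_with_marginal d \<mu>A \<mu> \<longleftrightarrow>
     sets \<mu> = sets (cube_space (d - 1) \<Otimes>\<^sub>M borel) \<and> prob_space \<mu> \<and>
     (\<forall>i<d - 1. distr \<mu> borel (\<lambda>(x, y). x i) = unif01) \<and>
     distr \<mu> borel snd = unif01 \<and>
     distr \<mu> (cube_space (d - 1)) fst = \<mu>A"

definition markov_kernel_of ::
  "nat \<Rightarrow> (nat \<Rightarrow> real) measure \<Rightarrow> ((nat \<Rightarrow> real) \<times> real) measure
     \<Rightarrow> ((nat \<Rightarrow> real) \<Rightarrow> real measure) \<Rightarrow> bool" where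
  "markov_kernel_of d \<mu>A \<mu> K \<longleftrightarrow>
     K \<in> cube_space (d - 1) \<rightarrow>\<^sub>M prob_algebra borel \<and>
     (\<forall>x\<in>space (cube_space (d - 1)). emeasure (K x) {0..1} = 1) \<and>
     (\<forall>B\<in>sets (cube_space (d - 1)). \<forall>F\<in>sets borel.
        emeasure \<mu> (B \<times> F) = (\<integral>\<^sup>+ x. indicator B x * emeasure (K x) F \<partial>\<mu>A))"

definition cond_quantile :: "((nat \<Rightarrow> real) \<Rightarrow> real measure) \<Rightarrow> real \<Rightarrow> (nat \<Rightarrow> real) \<Rightarrow> real" where
  "cond_quantile K \<tau> x = Inf {y \<in> {0..1}. \<tau> \<le> measure (K x) {0..y}}"

definition D_A1 ::
  "(nat \<Rightarrow> real) measure \<Rightarrow> ((nat \<Rightarrow> real) \<Rightarrow> real measure) \<Rightarrow> ((nat \<Rightarrow> real) \<Rightarrow> real measure) \<Rightarrow> real" where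
  "D_A1 \<mu>A K1 K2 = (\<integral>y. (\<integral>x. \<bar>measure (K1 x) {0..y} - measure (K2 x) {0..y}\<bar> \<partial>\<mu>A)
                      \<partial>(restrict_space lborel {0..1}))"

definition norm_A1 :: "(nat \<Rightarrow> real) measure \<Rightarrow> ((nat \<Rightarrow> real) \<Rightarrow> real) \<Rightarrow> real" where
  "norm_A1 \<mu>A f = (\<integral>x. \<bar>f x\<bar> \<partial>\<mu>A)"

end

(*
  The distance D_{A,1} integrates over x the area between the graphs of the two conditional
  distribution functions y |-> F_1(x, y) and y |-> F_2(x, y). Slicing the same region
  {(y, tau). tau lies between F_1(x, y) and F_2(x, y)} horizontally instead of vertically
  (Fubini) and using the Galois connection Q(tau) <= y <-> tau <= F(y) turns this area into the
  L1 distance of the conditional quantiles. Since both copulas have a uniform last marginal,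
  the conditional distribution functions average to y over mu_A, which bounds the inner integral
  by min (2 y, 2 - 2 y); integrating over y gives 1/2. The bound is attained by the two copulas
  concentrated on the graphs y = x_1 and y = 1 - x_1.
*)
theory Submission
  imports Defs
begin

section \<open>The unit interval\<close>

abbreviation unit_lborel :: "real measure" where
  "unit_lborel \<equiv> restrict_space lborel {0..1}"

lemma space_unit_lborel [simp]: "space unit_lborel = {0..1}"
  by (simp add: space_restrict_space)

lemma prob_space_unit_lborel: "prob_space unit_lborel"
  by (rule prob_spaceI) (simp add: emeasure_restrict_space)

lemma measurable_ident_unit_lborel [measurable]: "(\<lambda>t. t) \<in> borel_measurable unit_lborel"
  by (rule measurable_restrict_space1) simp

lemma integral_unit_lborel_indicator:
  assumes "S \<subseteq> {0..1}" "S \<in> sets borel"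
  shows "(\<integral>t. indicator S t \<partial>unit_lborel) = measure lborel S"
proof -
  have "emeasure lborel S \<le> emeasure lborel {0..1::real}"
    using assms by (intro emeasure_mono) auto
  then have finite: "emeasure lborel S \<noteq> \<infinity>"
    by (auto simp: top_unique)
  have "(\<integral>t. indicator S t \<partial>unit_lborel)
      = (\<integral>t. indicator {0..1} t *\<^sub>R indicator S t \<partial>lborel :: real)"
    by (rule integral_restrict_space) simp
  also have "\<dots> = (\<integral>t. indicator S t \<partial>lborel)"
    using assms(1) by (intro Bochner_Integration.integral_cong) (auto simp: indicator_def)
  finally show ?thesis
    using assms(2) finite by simp
qed

lemma integral_unit_lborel_le_xor:
  assumes "a \<in> {0..1}" "b \<in> {0..1}"
  shows "(\<integral>t. of_bool ((t \<le> a) \<noteq> (t \<le> b)) \<partial>unit_lborel) = \<bar>a - b\<bar>"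
proof -
  have "(\<integral>t. of_bool ((t \<le> a) \<noteq> (t \<le> b)) \<partial>unit_lborel)
      = (\<integral>t. indicator {min a b<..max a b} t \<partial>unit_lborel)"
    by (intro Bochner_Integration.integral_cong) (auto simp: indicator_def)
  also have "\<dots> = measure lborel {min a b<..max a b}"
    using assms by (intro integral_unit_lborel_indicator) auto
  finally show ?thesis
    by (simp add: abs_real_def max_def min_def)
qed

lemma integral_unit_lborel_ge_xor:
  assumes "a \<in> {0..1}" "b \<in> {0..1}"
  shows "(\<integral>t. of_bool ((a \<le> t) \<noteq> (b \<le> t)) \<partial>unit_lborel) = \<bar>a - b\<bar>"
proof -
  have "(\<integral>t. of_bool ((a \<le> t) \<noteq> (b \<le> t)) \<partial>unit_lborel)
      = (\<integral>t. indicator {min a b..<max a b} t \<partial>unit_lborel)"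
    by (intro Bochner_Integration.integral_cong) (auto simp: indicator_def)
  also have "\<dots> = measure lborel {min a b..<max a b}"
    using assms by (intro integral_unit_lborel_indicator) auto
  finally show ?thesis
    by (simp add: abs_real_def max_def min_def)
qed

lemma integral_unit_lborel_abs_2x_minus_1: "(\<integral>t. \<bar>2 * t - 1\<bar> \<partial>unit_lborel) = (1 / 2 :: real)"
proof -
  let ?f = "\<lambda>t. indicator {0..1/2} t *\<^sub>R (1 - 2 * t) :: real"
  let ?g = "\<lambda>t. indicator {1/2..1} t *\<^sub>R (2 * t - 1) :: real"
  have integrable: "integrable lborel ?f" "integrable lborel ?g"
    using borel_integrable_atLeastAtMost'[of 0 "1/2" "\<lambda>t. 1 - 2 * t :: real"]
      borel_integrable_atLeastAtMost'[of "1/2" 1 "\<lambda>t. 2 * t - 1 :: real"]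
    by (simp_all add: set_integrable_def continuous_on_diff continuous_on_mult)
  have "(\<integral>t. \<bar>2 * t - 1\<bar> \<partial>unit_lborel) = (\<integral>t. indicator {0..1} t *\<^sub>R \<bar>2 * t - 1\<bar> \<partial>lborel)"
    by (rule integral_restrict_space) simp
  also have "\<dots> = (\<integral>t. ?f t + ?g t \<partial>lborel)"
    by (intro Bochner_Integration.integral_cong) (auto simp: indicator_def)
  also have "\<dots> = (\<integral>t. ?f t \<partial>lborel) + (\<integral>t. ?g t \<partial>lborel)"
    using integrable by (rule Bochner_Integration.integral_add)
  also have "(\<integral>t. ?f t \<partial>lborel) = (\<lambda>t. t - t\<^sup>2) (1/2) - (\<lambda>t. t - t\<^sup>2) 0"
    by (rule integral_FTC_atLeastAtMost)
      (auto intro!: derivative_eq_intros continuous_intros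
        simp: has_real_derivative_iff_has_vector_derivative[symmetric])
  also have "(\<integral>t. ?g t \<partial>lborel) = (\<lambda>t. t\<^sup>2 - t) 1 - (\<lambda>t. t\<^sup>2 - t) (1/2)"
    by (rule integral_FTC_atLeastAtMost)
      (auto intro!: derivative_eq_intros continuous_intros
        simp: has_real_derivative_iff_has_vector_derivative[symmetric])
  finally show ?thesis
    by (simp add: power2_eq_square)
qed

lemma unif01_eq_density: "unif01 = density lborel (\<lambda>t. ennreal (indicator {0..1} t))"
  unfolding unif01_def uniform_measure_def
  by (intro density_cong) (auto simp: indicator_def)

lemma sets_unif01 [simp]: "sets unif01 = sets borel"
  by (simp add: unif01_def)

lemma emeasure_unif01_atLeastAtMost: "y \<in> {0..1} \<Longrightarrow> emeasure unif01 {0..y} = ennreal y"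
  unfolding unif01_def
  by (subst emeasure_uniform_measure) (auto simp: Int_absorb1 divide_ennreal_def)

lemma integral_unif01:
  fixes f :: "real \<Rightarrow> real"
  assumes "f \<in> borel_measurable borel"
  shows "integral\<^sup>L unif01 f = integral\<^sup>L unit_lborel f"
proof -
  have "integral\<^sup>L unif01 f = (\<integral>t. indicator {0..1} t *\<^sub>R f t \<partial>lborel)"
    unfolding unif01_eq_density by (rule integral_density) (use assms in auto)
  also have "\<dots> = integral\<^sup>L unit_lborel f"
    by (rule integral_restrict_space[symmetric]) simp
  finally show ?thesis .
qed

lemma distr_unif01_cong:
  assumes "f \<in> borel_measurable borel" "g \<in> borel_measurable borel" "\<And>t. t \<in> {0..1} \<Longrightarrow> f t = g t"
  shows "distr unif01 borel f = distr unif01 borel g"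
proof (rule distr_cong_AE)
  show "AE t in unif01. f t = g t"
    unfolding unif01_def using assms(3) by (intro AE_uniform_measureI) auto
qed (use assms in \<open>simp_all add: measurable_cong_sets[OF sets_unif01 refl]\<close>)

lemma distr_unif01_reflect: "distr unif01 borel (\<lambda>t. 1 - t) = unif01"
proof (rule measure_eqI)
  fix A :: "real set" assume "A \<in> sets (distr unif01 borel (\<lambda>t. 1 - t))"
  then have [measurable]: "A \<in> sets borel"
    by simp
  have reflect_measurable: "(\<lambda>t::real. 1 - t) \<in> borel_measurable borel"
    by simp
  have "(\<lambda>t. 1 - t) -` A \<in> sets borel"
    using measurable_sets[OF reflect_measurable \<open>A \<in> sets borel\<close>] by simp
  then have "emeasure (distr unif01 borel (\<lambda>t. 1 - t)) A
      = (\<integral>\<^sup>+t. ennreal (indicator {0..1} t) * indicator ((\<lambda>t. 1 - t) -` A) t \<partial>lborel)"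
    using reflect_measurable unfolding unif01_eq_density
    by (simp add: emeasure_distr emeasure_density)
  also have "\<dots> = (\<integral>\<^sup>+t. ennreal (indicator {0..1} (1 - t)) * indicator A (1 - t) \<partial>lborel)"
    by (intro nn_integral_cong) (auto simp: indicator_def)
  also have "\<dots> = (\<integral>\<^sup>+t. ennreal (indicator {0..1} t) * indicator A t \<partial>lborel)"
    using nn_integral_real_affine[of "\<lambda>t. ennreal (indicator {0..1} t) * indicator A t" "-1" 1]
    by simp
  also have "\<dots> = emeasure unif01 A"
    unfolding unif01_eq_density by (rule emeasure_density[symmetric]) auto
  finally show "emeasure (distr unif01 borel (\<lambda>t. 1 - t)) A = emeasure unif01 A" .
qed simp

section \<open>Distribution functions and quantiles on the unit interval\<close>

lemma (in finite_borel_measure) borel_measurable_cdf [measurable]: "cdf M \<in> borel_measurable borel"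
  by (rule borel_measurable_mono) (simp add: mono_def cdf_nondecreasing)

locale unit_distribution = real_distribution P for P :: "real measure" +
  assumes prob_unit_interval: "prob {0..1} = 1"
begin

lemma AE_unit_interval: "AE t in P. t \<in> {0..1}"
  using prob_unit_interval by (subst AE_in_set_eq_1) auto

lemma cdf_eq_measure_atLeastAtMost: "cdf P y = measure P {0..y}"
  unfolding cdf_def2 using AE_unit_interval by (intro measure_eq_AE) auto

lemma cdf_eq_1: "1 \<le> y \<Longrightarrow> cdf P y = 1"
  using cdf_nondecreasing[of 1 y] cdf_bounded_prob[of y] prob_unit_interval
  unfolding cdf_eq_measure_atLeastAtMost by linarith

lemma cdf_in_unit_interval: "cdf P y \<in> {0..1}"
  using cdf_nonneg cdf_bounded_prob by auto

end

definition unit_quantile :: "real measure \<Rightarrow> real \<Rightarrow> real" where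
  "unit_quantile P \<tau> = Inf {y \<in> {0..1}. \<tau> \<le> measure P {0..y}}"

lemma cond_quantile_eq_unit_quantile: "cond_quantile K \<tau> x = unit_quantile (K x) \<tau>"
  by (simp add: cond_quantile_def unit_quantile_def)

lemma unit_quantile_zero: "unit_quantile P 0 = 0"
proof -
  have "{y \<in> {0..1}. 0 \<le> measure P {0..y}} = {0..1::real}"
    by auto
  then show ?thesis
    by (simp add: unit_quantile_def)
qed

lemma unit_quantile_return:
  assumes "a \<in> {0..1}" "0 < \<tau>" "\<tau> \<le> 1"
  shows "unit_quantile (return borel a) \<tau> = a"
proof -
  have "{y \<in> {0..1}. \<tau> \<le> measure (return borel a) {0..y}} = {a..1}"
    using assms by (auto simp: measure_return indicator_def)
  then show ?thesis
    using assms by (simp add: unit_quantile_def)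
qed

context unit_distribution
begin

lemma unit_quantile_cdf: "unit_quantile P \<tau> = Inf {y \<in> {0..1}. \<tau> \<le> cdf P y}"
  by (simp add: unit_quantile_def cdf_eq_measure_atLeastAtMost)

lemma unit_quantile_le_iff:
  assumes "\<tau> \<le> 1"
  shows "unit_quantile P \<tau> \<le> y \<longleftrightarrow> 0 \<le> y \<and> \<tau> \<le> cdf P y"
proof -
  define S where "S = {y \<in> {0..1}. \<tau> \<le> cdf P y}"
  define q where "q = Inf S"
  have q: "unit_quantile P \<tau> = q"
    by (simp add: q_def S_def unit_quantile_cdf)
  have "1 \<in> S"
    using assms by (simp add: S_def cdf_eq_1)
  moreover have bdd: "bdd_below S"
    by (auto simp: S_def intro: bdd_belowI[of _ 0])
  ultimately have "0 \<le> q" "q \<le> 1"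
    unfolding q_def by (auto simp: S_def intro: cInf_greatest cInf_lower)
  have "\<tau> \<le> cdf P q"
  proof (rule tendsto_lowerbound)
    show "(cdf P \<longlongrightarrow> cdf P q) (at_right q)"
      using cdf_is_right_cont by (simp add: continuous_within)
    show "\<forall>\<^sub>F s in at_right q. \<tau> \<le> cdf P s"
    proof (rule eventually_at_rightI)
      fix s assume "s \<in> {q<..<q + 1}"
      then have "Inf S < s"
        by (simp add: q_def)
      then obtain s' where "s' \<in> S" "s' < s"
        using cInf_less_iff[of S s] \<open>1 \<in> S\<close> bdd by blast
      then show "\<tau> \<le> cdf P s"
        using cdf_nondecreasing[of s' s] by (auto simp: S_def)
    qed simp
  qed simp
  moreover have "y \<in> S \<Longrightarrow> q \<le> y"
    unfolding q_def using bdd by (simp add: cInf_lower)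
  ultimately show ?thesis
    unfolding q using \<open>0 \<le> q\<close> \<open>q \<le> 1\<close> cdf_nondecreasing[of q y]
    by (cases "y \<le> 1") (auto simp: S_def)
qed

lemma unit_quantile_in_unit_interval:
  assumes "\<tau> \<le> 1"
  shows "unit_quantile P \<tau> \<in> {0..1}"
  using unit_quantile_le_iff[OF assms, of 1] unit_quantile_le_iff[OF assms, of "unit_quantile P \<tau>"]
    cdf_eq_1[of 1] assms by auto

end

lemma (in pair_prob_space) Fubini_integral_bounded:
  fixes f :: "'a \<Rightarrow> 'b \<Rightarrow> real"
  assumes "case_prod f \<in> borel_measurable (M1 \<Otimes>\<^sub>M M2)"
    and "\<And>x y. x \<in> space M1 \<Longrightarrow> y \<in> space M2 \<Longrightarrow> \<bar>f x y\<bar> \<le> B"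
  shows "(\<integral>y. (\<integral>x. f x y \<partial>M1) \<partial>M2) = (\<integral>x. (\<integral>y. f x y \<partial>M2) \<partial>M1)"
  using assms by (intro Fubini_integral P.integrable_const_bound[where B=B] AE_I2)
    (auto simp: space_pair_measure)

lemma integral_abs_cdf_diff_eq_integral_abs_quantile_diff:
  assumes "unit_distribution P1" "unit_distribution P2"
  shows "(\<integral>y. \<bar>cdf P1 y - cdf P2 y\<bar> \<partial>unit_lborel)
       = (\<integral>\<tau>. \<bar>unit_quantile P1 \<tau> - unit_quantile P2 \<tau>\<bar> \<partial>unit_lborel)"
proof -
  interpret P1: unit_distribution P1 by fact
  interpret P2: unit_distribution P2 by fact
  interpret pair_prob_space unit_lborel unit_lborel
    by (simp add: pair_prob_space_def pair_sigma_finite_def prob_space_unit_lborel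
        prob_space_imp_sigma_finite)
  define h :: "real \<Rightarrow> real \<Rightarrow> real"
    where "h y \<tau> = of_bool ((\<tau> \<le> cdf P1 y) \<noteq> (\<tau> \<le> cdf P2 y))" for y \<tau>
  have "(\<lambda>(y, \<tau>). h y \<tau>) \<in> borel_measurable (unit_lborel \<Otimes>\<^sub>M unit_lborel)"
    unfolding h_def case_prod_beta by measurable
  then have "(\<integral>y. (\<integral>\<tau>. h y \<tau> \<partial>unit_lborel) \<partial>unit_lborel)
           = (\<integral>\<tau>. (\<integral>y. h y \<tau> \<partial>unit_lborel) \<partial>unit_lborel)"
    by (rule Fubini_integral_bounded[symmetric, where B=1]) (simp add: h_def)
  moreover have "(\<integral>\<tau>. h y \<tau> \<partial>unit_lborel) = \<bar>cdf P1 y - cdf P2 y\<bar>" for y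
    unfolding h_def using P1.cdf_in_unit_interval P2.cdf_in_unit_interval
    by (rule integral_unit_lborel_le_xor)
  moreover have "(\<integral>y. h y \<tau> \<partial>unit_lborel) = \<bar>unit_quantile P1 \<tau> - unit_quantile P2 \<tau>\<bar>"
    if "\<tau> \<in> {0..1}" for \<tau>
  proof -
    have "(\<integral>y. h y \<tau> \<partial>unit_lborel)
        = (\<integral>y. of_bool ((unit_quantile P1 \<tau> \<le> y) \<noteq> (unit_quantile P2 \<tau> \<le> y)) \<partial>unit_lborel)"
      using that by (intro Bochner_Integration.integral_cong)
        (auto simp: h_def P1.unit_quantile_le_iff P2.unit_quantile_le_iff)
    also have "\<dots> = \<bar>unit_quantile P1 \<tau> - unit_quantile P2 \<tau>\<bar>"
      using that by (intro integral_unit_lborel_ge_xor P1.unit_quantile_in_unit_interval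
          P2.unit_quantile_in_unit_interval) auto
    finally show ?thesis .
  qed
  ultimately show ?thesis
    by (auto intro: Bochner_Integration.integral_cong)
qed

section \<open>Kernels into the unit interval\<close>

locale unit_kernel =
  fixes M :: "'a measure" and K :: "'a \<Rightarrow> real measure"
  assumes measurable_kernel [measurable]: "K \<in> M \<rightarrow>\<^sub>M prob_algebra borel"
    and emeasure_kernel_unit_interval: "x \<in> space M \<Longrightarrow> emeasure (K x) {0..1} = 1"
begin

lemma unit_distribution_kernel:
  assumes "x \<in> space M"
  shows "unit_distribution (K x)"
proof -
  have "K x \<in> space (prob_algebra borel)"
    using assms by (rule measurable_space[OF measurable_kernel])
  then interpret prob_space "K x"
    by (simp add: space_prob_algebra)
  show ?thesis
    using \<open>K x \<in> space (prob_algebra borel)\<close> emeasure_kernel_unit_interval[OF assms]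
    by unfold_locales (simp_all add: space_prob_algebra emeasure_eq_measure)
qed

lemma measurable_kernel_measure [measurable]:
  "A \<in> sets borel \<Longrightarrow> (\<lambda>x. measure (K x) A) \<in> borel_measurable M"
  by (rule measurable_compose[OF measurable_kernel measurable_measure_prob_algebra])

lemma emeasure_kernel_eq_measure:
  assumes "x \<in> space M"
  shows "emeasure (K x) A = measure (K x) A"
proof -
  interpret unit_distribution "K x"
    using assms by (rule unit_distribution_kernel)
  show ?thesis
    by (rule emeasure_eq_measure)
qed

lemma measure_kernel_in_unit_interval:
  assumes "x \<in> space M"
  shows "measure (K x) A \<in> {0..1}"
proof -
  interpret unit_distribution "K x"
    using assms by (rule unit_distribution_kernel)
  show ?thesis
    by simp
qed

lemma measure_kernel_atLeastAtMost: "x \<in> space M \<Longrightarrow> measure (K x) {0..y} = cdf (K x) y"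
  using unit_distribution.cdf_eq_measure_atLeastAtMost[OF unit_distribution_kernel] by simp

lemma measurable_kernel_cdf:
  "(\<lambda>p. cdf (K (fst p)) (snd p)) \<in> borel_measurable (M \<Otimes>\<^sub>M unit_lborel)"
  unfolding cdf_def2
proof (rule measure_measurable_prob_algebra2[where N=borel])
  let ?MN = "(M \<Otimes>\<^sub>M unit_lborel) \<Otimes>\<^sub>M (borel :: real measure)"
  have "Sigma (space (M \<Otimes>\<^sub>M unit_lborel)) (\<lambda>p. {..snd p}) = {q \<in> space ?MN. snd q \<le> snd (fst q)}"
    by (auto simp: space_pair_measure)
  also have "\<dots> \<in> sets ?MN"
    by measurable
  finally show "Sigma (space (M \<Otimes>\<^sub>M unit_lborel)) (\<lambda>p. {..snd p}) \<in> sets ?MN" .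
qed measurable

lemma measurable_kernel_quantile:
  "(\<lambda>p. unit_quantile (K (fst p)) (snd p)) \<in> borel_measurable (M \<Otimes>\<^sub>M unit_lborel)"
proof (subst borel_measurable_iff_le, intro allI)
  fix a :: real
  let ?S = "space (M \<Otimes>\<^sub>M unit_lborel)"
  have "unit_quantile (K (fst p)) (snd p) \<le> a \<longleftrightarrow> 0 \<le> a \<and> snd p \<le> measure (K (fst p)) {..a}"
    if "p \<in> ?S" for p
    using that
      unit_distribution.unit_quantile_le_iff[OF unit_distribution_kernel, of "fst p" "snd p" a]
    by (simp add: space_pair_measure cdf_def2 mem_Times_iff)
  then have "{p \<in> ?S. unit_quantile (K (fst p)) (snd p) \<le> a}
      = {p \<in> ?S. 0 \<le> a \<and> snd p \<le> measure (K (fst p)) {..a}}"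
    by blast
  also have "\<dots> \<in> sets (M \<Otimes>\<^sub>M unit_lborel)"
    by measurable
  finally show "{p \<in> ?S. unit_quantile (K (fst p)) (snd p) \<le> a} \<in> sets (M \<Otimes>\<^sub>M unit_lborel)" .
qed

end

lemma integral_abs_kernel_cdf_diff_eq_integral_abs_quantile_diff:
  assumes "prob_space M" "unit_kernel M K1" "unit_kernel M K2"
  shows "(\<integral>y. (\<integral>x. \<bar>cdf (K1 x) y - cdf (K2 x) y\<bar> \<partial>M) \<partial>unit_lborel)
       = (\<integral>\<tau>. (\<integral>x. \<bar>unit_quantile (K1 x) \<tau> - unit_quantile (K2 x) \<tau>\<bar> \<partial>M) \<partial>unit_lborel)"
proof -
  interpret K1: unit_kernel M K1 by fact
  interpret K2: unit_kernel M K2 by fact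
  interpret pair_prob_space M unit_lborel
    using assms(1) by (simp add: pair_prob_space_def pair_sigma_finite_def prob_space_unit_lborel
        prob_space_imp_sigma_finite)
  have "(\<integral>y. (\<integral>x. \<bar>cdf (K1 x) y - cdf (K2 x) y\<bar> \<partial>M) \<partial>unit_lborel)
      = (\<integral>x. (\<integral>y. \<bar>cdf (K1 x) y - cdf (K2 x) y\<bar> \<partial>unit_lborel) \<partial>M)"
  proof (rule Fubini_integral_bounded[where B=1])
    show "(\<lambda>(x, y). \<bar>cdf (K1 x) y - cdf (K2 x) y\<bar>) \<in> borel_measurable (M \<Otimes>\<^sub>M unit_lborel)"
      unfolding case_prod_beta
      using K1.measurable_kernel_cdf K2.measurable_kernel_cdf
      by (intro borel_measurable_abs borel_measurable_diff)
    show "\<bar>\<bar>cdf (K1 x) y - cdf (K2 x) y\<bar>\<bar> \<le> 1" if "x \<in> space M" for x y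
      using unit_distribution.cdf_in_unit_interval[OF K1.unit_distribution_kernel[OF that], of y]
        unit_distribution.cdf_in_unit_interval[OF K2.unit_distribution_kernel[OF that], of y]
      by (simp add: abs_le_iff)
  qed
  also have "\<dots> = (\<integral>x. (\<integral>\<tau>. \<bar>unit_quantile (K1 x) \<tau> - unit_quantile (K2 x) \<tau>\<bar> \<partial>unit_lborel) \<partial>M)"
    by (intro Bochner_Integration.integral_cong integral_abs_cdf_diff_eq_integral_abs_quantile_diff
        K1.unit_distribution_kernel K2.unit_distribution_kernel) simp_all
  also have "\<dots> = (\<integral>\<tau>. (\<integral>x. \<bar>unit_quantile (K1 x) \<tau> - unit_quantile (K2 x) \<tau>\<bar> \<partial>M) \<partial>unit_lborel)"
  proof (rule Fubini_integral_bounded[symmetric, where B=1])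
    show "(\<lambda>(x, \<tau>). \<bar>unit_quantile (K1 x) \<tau> - unit_quantile (K2 x) \<tau>\<bar>)
        \<in> borel_measurable (M \<Otimes>\<^sub>M unit_lborel)"
      unfolding case_prod_beta
      using K1.measurable_kernel_quantile K2.measurable_kernel_quantile
      by (intro borel_measurable_abs borel_measurable_diff)
    show "\<bar>\<bar>unit_quantile (K1 x) \<tau> - unit_quantile (K2 x) \<tau>\<bar>\<bar> \<le> 1"
      if "x \<in> space M" "\<tau> \<in> space unit_lborel" for x \<tau>
      using unit_distribution.unit_quantile_in_unit_interval[of "K1 x" \<tau>]
        unit_distribution.unit_quantile_in_unit_interval[of "K2 x" \<tau>]
        K1.unit_distribution_kernel[OF that(1)] K2.unit_distribution_kernel[OF that(1)]
        that(2) by (simp add: abs_le_iff)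
  qed
  finally show ?thesis .
qed

lemma D_A1_eq_integral_norm_A1_cond_quantile_diff:
  assumes "prob_space \<mu>A" "unit_kernel \<mu>A K1" "unit_kernel \<mu>A K2"
  shows "D_A1 \<mu>A K1 K2
       = (\<integral>\<tau>. norm_A1 \<mu>A (\<lambda>x. cond_quantile K1 \<tau> x - cond_quantile K2 \<tau> x) \<partial>unit_lborel)"
proof -
  interpret K1: unit_kernel \<mu>A K1 by fact
  interpret K2: unit_kernel \<mu>A K2 by fact
  have "D_A1 \<mu>A K1 K2 = (\<integral>y. (\<integral>x. \<bar>cdf (K1 x) y - cdf (K2 x) y\<bar> \<partial>\<mu>A) \<partial>unit_lborel)"
    unfolding D_A1_def
    by (simp add: K1.measure_kernel_atLeastAtMost K2.measure_kernel_atLeastAtMost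
        cong: Bochner_Integration.integral_cong)
  also have "\<dots> = (\<integral>\<tau>. (\<integral>x. \<bar>unit_quantile (K1 x) \<tau> - unit_quantile (K2 x) \<tau>\<bar> \<partial>\<mu>A) \<partial>unit_lborel)"
    using assms by (rule integral_abs_kernel_cdf_diff_eq_integral_abs_quantile_diff)
  finally show ?thesis
    by (simp add: norm_A1_def cond_quantile_eq_unit_quantile)
qed

lemma (in prob_space) expectation_abs_diff_le_of_equal_expectations:
  fixes f g :: "'a \<Rightarrow> real"
  assumes [measurable]: "f \<in> borel_measurable M" "g \<in> borel_measurable M"
    and range: "\<And>x. x \<in> space M \<Longrightarrow> f x \<in> {0..1} \<and> g x \<in> {0..1}"
    and "expectation f = m" "expectation g = m"
  shows "expectation (\<lambda>x. \<bar>f x - g x\<bar>) \<le> 1 - \<bar>2 * m - 1\<bar>"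
proof -
  have [simp]: "integrable M f" "integrable M g"
    using range by (auto intro!: integrable_const_bound[where B=1])
  have "\<bar>f x - g x\<bar> \<le> f x + g x" "\<bar>f x - g x\<bar> \<le> (1 - f x) + (1 - g x)" if "x \<in> space M" for x
    using range[OF that] by auto
  then have "expectation (\<lambda>x. \<bar>f x - g x\<bar>) \<le> expectation (\<lambda>x. f x + g x)"
    "expectation (\<lambda>x. \<bar>f x - g x\<bar>) \<le> expectation (\<lambda>x. (1 - f x) + (1 - g x))"
    by (intro integral_mono; simp)+
  then show ?thesis
    using assms(4,5) by (simp add: prob_space)
qed

lemma D_A1_le_half:
  assumes "prob_space \<mu>A" "unit_kernel \<mu>A K1" "unit_kernel \<mu>A K2"
    and mean1: "\<And>y. y \<in> {0..1} \<Longrightarrow> (\<integral>x. measure (K1 x) {0..y} \<partial>\<mu>A) = y"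
    and mean2: "\<And>y. y \<in> {0..1} \<Longrightarrow> (\<integral>x. measure (K2 x) {0..y} \<partial>\<mu>A) = y"
  shows "D_A1 \<mu>A K1 K2 \<le> 1 / 2"
proof -
  interpret prob_space \<mu>A by fact
  interpret K1: unit_kernel \<mu>A K1 by fact
  interpret K2: unit_kernel \<mu>A K2 by fact
  interpret U: prob_space unit_lborel by (rule prob_space_unit_lborel)
  define g where "g y = (\<integral>x. \<bar>measure (K1 x) {0..y} - measure (K2 x) {0..y}\<bar> \<partial>\<mu>A)" for y
  have g_le: "g y \<le> 1 - \<bar>2 * y - 1\<bar>" if "y \<in> {0..1}" for y
    unfolding g_def using that
    by (intro expectation_abs_diff_le_of_equal_expectations mean1 mean2
        K1.measurable_kernel_measure K2.measurable_kernel_measure conjI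
        K1.measure_kernel_in_unit_interval K2.measure_kernel_in_unit_interval) auto
  have "integrable unit_lborel (\<lambda>y. \<bar>2 * y - 1\<bar> :: real)"
    by (intro U.integrable_const_bound[where B=1] AE_I2) (auto simp: abs_le_iff)
  then have "(\<integral>y. 1 - \<bar>2 * y - 1\<bar> \<partial>unit_lborel) = 1 / (2 :: real)"
    by (simp add: Bochner_Integration.integral_diff U.prob_space[unfolded space_unit_lborel]
        integral_unit_lborel_abs_2x_minus_1)
  moreover have "integrable unit_lborel g \<Longrightarrow>
      integral\<^sup>L unit_lborel g \<le> (\<integral>y. 1 - \<bar>2 * y - 1\<bar> \<partial>unit_lborel)"
    using g_le \<open>integrable unit_lborel (\<lambda>y. \<bar>2 * y - 1\<bar>)\<close> by (intro integral_mono) auto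
  ultimately show ?thesis
    unfolding D_A1_def g_def[symmetric]
    by (cases "integrable unit_lborel g") (auto simp: not_integrable_integral_eq)
qed

lemma unit_kernel_return:
  assumes "h \<in> borel_measurable M" "\<And>x. x \<in> space M \<Longrightarrow> h x \<in> {0..1}"
  shows "unit_kernel M (\<lambda>x. return borel (h x))"
proof
  show "(\<lambda>x. return borel (h x)) \<in> M \<rightarrow>\<^sub>M prob_algebra borel"
    using assms(1) by (rule measurable_compose[OF _ measurable_return_prob_space])
  show "emeasure (return borel (h x)) {0..1} = 1" if "x \<in> space M" for x
    using assms(2)[OF that] by simp
qed

lemma D_A1_return:
  assumes "prob_space \<mu>A"
    and h1: "h1 \<in> borel_measurable \<mu>A" "\<And>x. x \<in> space \<mu>A \<Longrightarrow> h1 x \<in> {0..1}"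
    and h2: "h2 \<in> borel_measurable \<mu>A" "\<And>x. x \<in> space \<mu>A \<Longrightarrow> h2 x \<in> {0..1}"
  shows "D_A1 \<mu>A (\<lambda>x. return borel (h1 x)) (\<lambda>x. return borel (h2 x)) = (\<integral>x. \<bar>h1 x - h2 x\<bar> \<partial>\<mu>A)"
proof -
  let ?K1 = "\<lambda>x. return borel (h1 x)" and ?K2 = "\<lambda>x. return borel (h2 x)"
  define V where "V = (\<integral>x. \<bar>h1 x - h2 x\<bar> \<partial>\<mu>A)"
  have quantile_distance:
    "norm_A1 \<mu>A (\<lambda>x. cond_quantile ?K1 \<tau> x - cond_quantile ?K2 \<tau> x) = indicator {0<..1} \<tau> * V"
    if "\<tau> \<in> {0..1}" for \<tau>
    using that h1(2) h2(2)
    by (cases "\<tau> = 0")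
      (auto simp: norm_A1_def V_def cond_quantile_eq_unit_quantile unit_quantile_zero
        unit_quantile_return intro!: Bochner_Integration.integral_cong)
  have "D_A1 \<mu>A ?K1 ?K2
      = (\<integral>\<tau>. norm_A1 \<mu>A (\<lambda>x. cond_quantile ?K1 \<tau> x - cond_quantile ?K2 \<tau> x) \<partial>unit_lborel)"
    using assms by (intro D_A1_eq_integral_norm_A1_cond_quantile_diff unit_kernel_return)
  also have "\<dots> = (\<integral>\<tau>. indicator {0<..1} \<tau> * V \<partial>unit_lborel)"
    by (intro Bochner_Integration.integral_cong) (simp_all add: quantile_distance)
  also have "\<dots> = (\<integral>\<tau>. indicator {0<..1} \<tau> \<partial>unit_lborel) * V"
    by (rule integral_mult_left_zero)
  also have "\<dots> = V"
    by (subst integral_unit_lborel_indicator) auto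
  finally show ?thesis
    by (simp add: V_def)
qed

section \<open>Copulas\<close>

lemma sets_copula_measure: "copula_measure n \<mu>A \<Longrightarrow> sets \<mu>A = sets (cube_space n)"
  by (simp add: copula_measure_def)

lemma distr_copula_measure_component:
  assumes "copula_measure n \<mu>A" "i < n" "g \<in> borel_measurable borel"
  shows "distr \<mu>A borel (\<lambda>x. g (x i)) = distr unif01 borel g"
proof -
  have "(\<lambda>x. x i) \<in> borel_measurable \<mu>A"
    using assms(2) unfolding measurable_cong_sets[OF sets_copula_measure[OF assms(1)] refl]
    by (simp add: cube_space_def)
  then have "distr \<mu>A borel (\<lambda>x. g (x i)) = distr (distr \<mu>A borel (\<lambda>x. x i)) borel g"
    using assms(3) by (simp add: distr_distr comp_def)
  then show ?thesis
    using assms(1,2) by (simp add: copula_measure_def)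
qed

lemma sets_marginal_copula_with_marginal:
  "copula_with_marginal d \<mu>A \<mu> \<Longrightarrow> sets \<mu>A = sets (cube_space (d - 1))"
  unfolding copula_with_marginal_def by (metis sets_distr)

lemma unit_kernel_markov_kernel_of:
  assumes "sets \<mu>A = sets (cube_space (d - 1))" "markov_kernel_of d \<mu>A \<mu> K"
  shows "unit_kernel \<mu>A K"
proof
  show "K \<in> \<mu>A \<rightarrow>\<^sub>M prob_algebra borel"
    using assms(2) by (simp add: markov_kernel_of_def measurable_cong_sets[OF assms(1) refl])
  show "emeasure (K x) {0..1} = 1" if "x \<in> space \<mu>A" for x
    using assms(2) that sets_eq_imp_space_eq[OF assms(1)] by (simp add: markov_kernel_of_def)
qed

lemma integral_markov_kernel_atLeastAtMost:
  assumes copula: "copula_with_marginal d \<mu>A \<mu>" and kernel: "markov_kernel_of d \<mu>A \<mu> K"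
    and "y \<in> {0..1}"
  shows "(\<integral>x. measure (K x) {0..y} \<partial>\<mu>A) = y"
proof -
  let ?C = "cube_space (d - 1)"
  have sets_\<mu>A: "sets \<mu>A = sets ?C"
    using copula by (rule sets_marginal_copula_with_marginal)
  interpret unit_kernel \<mu>A K
    using sets_\<mu>A kernel by (rule unit_kernel_markov_kernel_of)
  have sets_\<mu>: "sets \<mu> = sets (?C \<Otimes>\<^sub>M borel)"
    using copula by (simp add: copula_with_marginal_def)
  have [measurable]: "snd \<in> \<mu> \<rightarrow>\<^sub>M borel"
    by (subst measurable_cong_sets[OF sets_\<mu> refl]) (rule measurable_snd)
  have "ennreal y = emeasure (distr \<mu> borel snd) {0..y}"
    using copula \<open>y \<in> {0..1}\<close> by (simp add: copula_with_marginal_def emeasure_unif01_atLeastAtMost)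
  also have "\<dots> = emeasure \<mu> (space ?C \<times> {0..y})"
    using sets_eq_imp_space_eq[OF sets_\<mu>]
    by (subst emeasure_distr) (auto simp: space_pair_measure intro!: arg_cong[where f="emeasure \<mu>"])
  also have "\<dots> = (\<integral>\<^sup>+x. indicator (space ?C) x * emeasure (K x) {0..y} \<partial>\<mu>A)"
    using kernel by (simp add: markov_kernel_of_def)
  also have "\<dots> = (\<integral>\<^sup>+x. ennreal (measure (K x) {0..y}) \<partial>\<mu>A)"
    using sets_eq_imp_space_eq[OF sets_\<mu>A]
    by (intro nn_integral_cong) (simp add: emeasure_kernel_eq_measure)
  finally have "(\<integral>\<^sup>+x. ennreal (measure (K x) {0..y}) \<partial>\<mu>A) = ennreal y"
    by (rule sym)
  then show ?thesis
    using \<open>y \<in> {0..1}\<close> by (simp add: integral_eq_nn_integral)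
qed

lemma copula_with_marginal_graph:
  assumes copula: "copula_measure (d - 1) \<mu>A"
    and h: "h \<in> borel_measurable (cube_space (d - 1))" and uniform: "distr \<mu>A borel h = unif01"
  shows "copula_with_marginal d \<mu>A (distr \<mu>A (cube_space (d - 1) \<Otimes>\<^sub>M borel) (\<lambda>x. (x, h x)))"
proof -
  let ?C = "cube_space (d - 1)"
  have sets_\<mu>A: "sets \<mu>A = sets ?C"
    using copula by (rule sets_copula_measure)
  interpret prob_space \<mu>A
    using copula by (simp add: copula_measure_def)
  have graph [measurable]: "(\<lambda>x. (x, h x)) \<in> \<mu>A \<rightarrow>\<^sub>M ?C \<Otimes>\<^sub>M borel"
    using h
    by (simp add: measurable_cong_sets[OF sets_\<mu>A refl] measurable_Pair measurable_ident_sets)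
  have component: "(\<lambda>(x, y). x i) \<in> ?C \<Otimes>\<^sub>M borel \<rightarrow>\<^sub>M (borel :: real measure)" if "i < d - 1" for i
    using that unfolding cube_space_def by (simp add: case_prod_unfold)
  show ?thesis
    unfolding copula_with_marginal_def
  proof (intro conjI allI impI)
    show "prob_space (distr \<mu>A (?C \<Otimes>\<^sub>M borel) (\<lambda>x. (x, h x)))"
      by (rule prob_space_distr[OF graph])
    show "distr (distr \<mu>A (?C \<Otimes>\<^sub>M borel) (\<lambda>x. (x, h x))) borel (\<lambda>(x, y). x i) = unif01"
      if "i < d - 1" for i
      using copula that
      by (subst distr_distr[OF component[OF that] graph]) (simp add: comp_def copula_measure_def)
    show "distr (distr \<mu>A (?C \<Otimes>\<^sub>M borel) (\<lambda>x. (x, h x))) borel snd = unif01"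
      using uniform by (subst distr_distr[OF measurable_snd graph]) (simp add: comp_def)
    show "distr (distr \<mu>A (?C \<Otimes>\<^sub>M borel) (\<lambda>x. (x, h x))) ?C fst = \<mu>A"
      using sets_\<mu>A by (subst distr_distr[OF measurable_fst graph]) (simp add: comp_def distr_id2)
  qed simp
qed

lemma markov_kernel_of_graph:
  assumes sets_\<mu>A: "sets \<mu>A = sets (cube_space (d - 1))"
    and h: "h \<in> borel_measurable (cube_space (d - 1))" and range: "\<And>x. h x \<in> {0..1}"
  shows "markov_kernel_of d \<mu>A (distr \<mu>A (cube_space (d - 1) \<Otimes>\<^sub>M borel) (\<lambda>x. (x, h x)))
           (\<lambda>x. return borel (h x))"
  unfolding markov_kernel_of_def
proof (intro conjI ballI)
  let ?C = "cube_space (d - 1)"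
  have graph: "(\<lambda>x. (x, h x)) \<in> \<mu>A \<rightarrow>\<^sub>M ?C \<Otimes>\<^sub>M borel"
    using h
    by (simp add: measurable_cong_sets[OF sets_\<mu>A refl] measurable_Pair measurable_ident_sets)
  show "(\<lambda>x. return borel (h x)) \<in> ?C \<rightarrow>\<^sub>M prob_algebra borel"
    using h by (rule measurable_compose[OF _ measurable_return_prob_space])
  show "emeasure (return borel (h x)) {0..1} = 1" for x
    using range[of x] by simp
  fix B F assume "B \<in> sets ?C" "F \<in> sets (borel :: real measure)"
  then have BF: "B \<times> F \<in> sets (?C \<Otimes>\<^sub>M borel)"
    by simp
  have "emeasure (distr \<mu>A (?C \<Otimes>\<^sub>M borel) (\<lambda>x. (x, h x))) (B \<times> F)
      = (\<integral>\<^sup>+x. indicator ((\<lambda>x. (x, h x)) -` (B \<times> F) \<inter> space \<mu>A) x \<partial>\<mu>A)"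
    using measurable_sets[OF graph BF] by (subst emeasure_distr[OF graph BF]) simp
  also have "\<dots> = (\<integral>\<^sup>+x. indicator B x * emeasure (return borel (h x)) F \<partial>\<mu>A)"
    using \<open>F \<in> sets borel\<close> by (intro nn_integral_cong) (auto simp: indicator_def)
  finally show "emeasure (distr \<mu>A (?C \<Otimes>\<^sub>M borel) (\<lambda>x. (x, h x))) (B \<times> F)
      = (\<integral>\<^sup>+x. indicator B x * emeasure (return borel (h x)) F \<partial>\<mu>A)" .
qed

lemma D_A1_attains_half:
  assumes "d \<ge> 2" and copula: "copula_measure (d - 1) \<mu>A"
  shows "\<exists>\<mu>1 \<mu>2 K1 K2.
           copula_with_marginal d \<mu>A \<mu>1 \<and> copula_with_marginal d \<mu>A \<mu>2 \<and>
           markov_kernel_of d \<mu>A \<mu>1 K1 \<and> markov_kernel_of d \<mu>A \<mu>2 K2 \<and>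
           D_A1 \<mu>A K1 K2 = 1 / 2"
proof -
  let ?C = "cube_space (d - 1)"
  have sets_\<mu>A: "sets \<mu>A = sets ?C"
    using copula by (rule sets_copula_measure)
  have "0 < d - 1"
    using \<open>d \<ge> 2\<close> by simp
  \<comment> \<open>clamped so that the kernels are concentrated on [0, 1] at every point of the cube,
    as \<open>markov_kernel_of\<close> demands, not merely \<open>\<mu>A\<close>-almost everywhere\<close>
  define c where "c x = max 0 (min 1 (x 0))" for x :: "nat \<Rightarrow> real"
  have [measurable]: "(\<lambda>x. x 0) \<in> borel_measurable ?C"
    using \<open>0 < d - 1\<close> unfolding cube_space_def by (intro measurable_component_singleton) auto
  then have c_measurable: "c \<in> borel_measurable ?C" "(\<lambda>x. 1 - c x) \<in> borel_measurable ?C"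
    unfolding c_def by measurable
  have c_range: "c x \<in> {0..1}" "1 - c x \<in> {0..1}" for x
    by (auto simp: c_def)
  have "distr \<mu>A borel c = distr unif01 borel (\<lambda>t. t)"
    unfolding c_def
      distr_copula_measure_component[OF copula \<open>0 < d - 1\<close>, of "\<lambda>t. max 0 (min 1 t)", simplified]
    by (rule distr_unif01_cong) auto
  then have c_uniform: "distr \<mu>A borel c = unif01"
    by (simp add: distr_id2)
  have "distr \<mu>A borel (\<lambda>x. 1 - c x) = distr unif01 borel (\<lambda>t. 1 - t)"
    unfolding c_def
      distr_copula_measure_component[OF copula \<open>0 < d - 1\<close>, of "\<lambda>t. 1 - max 0 (min 1 t)", simplified]
    by (rule distr_unif01_cong) auto
  then have one_minus_c_uniform: "distr \<mu>A borel (\<lambda>x. 1 - c x) = unif01"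
    by (simp add: distr_unif01_reflect)
  have "prob_space \<mu>A"
    using copula by (simp add: copula_measure_def)
  then have "D_A1 \<mu>A (\<lambda>x. return borel (c x)) (\<lambda>x. return borel (1 - c x))
      = (\<integral>x. \<bar>2 * c x - 1\<bar> \<partial>\<mu>A)"
    using c_measurable c_range
    by (subst D_A1_return) (simp_all add: measurable_cong_sets[OF sets_\<mu>A refl] abs_minus_commute)
  also have "\<dots> = (\<integral>t. \<bar>2 * t - 1\<bar> \<partial>distr \<mu>A borel c)"
    using c_measurable by (simp add: integral_distr measurable_cong_sets[OF sets_\<mu>A refl])
  also have "\<dots> = 1 / 2"
    by (simp add: c_uniform integral_unif01 integral_unit_lborel_abs_2x_minus_1)
  finally show ?thesis
    using copula_with_marginal_graph[OF copula c_measurable(1) c_uniform]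
      copula_with_marginal_graph[OF copula c_measurable(2) one_minus_c_uniform]
      markov_kernel_of_graph[OF sets_\<mu>A c_measurable(1) c_range(1)]
      markov_kernel_of_graph[OF sets_\<mu>A c_measurable(2) c_range(2)]
    by blast
qed

theorem theorem21:
  fixes d :: nat and \<mu>A :: "(nat \<Rightarrow> real) measure"
  assumes "d \<ge> 2" and "copula_measure (d - 1) \<mu>A"
  shows "(\<forall>\<mu>1 \<mu>2 K1 K2.
            copula_with_marginal d \<mu>A \<mu>1 \<longrightarrow> copula_with_marginal d \<mu>A \<mu>2 \<longrightarrow>
            markov_kernel_of d \<mu>A \<mu>1 K1 \<longrightarrow> markov_kernel_of d \<mu>A \<mu>2 K2 \<longrightarrow>
            D_A1 \<mu>A K1 K2 =
              (\<integral>\<tau>. norm_A1 \<mu>A (\<lambda>x. cond_quantile K1 \<tau> x - cond_quantile K2 \<tau> x)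
                 \<partial>(restrict_space lborel {0..1}))
            \<and> D_A1 \<mu>A K1 K2 \<le> 1 / 2)
       \<and> (\<exists>\<mu>1 \<mu>2 K1 K2.
            copula_with_marginal d \<mu>A \<mu>1 \<and> copula_with_marginal d \<mu>A \<mu>2 \<and>
            markov_kernel_of d \<mu>A \<mu>1 K1 \<and> markov_kernel_of d \<mu>A \<mu>2 K2 \<and>
            D_A1 \<mu>A K1 K2 = 1 / 2)"
proof (intro conjI allI impI)
  fix \<mu>1 \<mu>2 K1 K2
  assume copulas: "copula_with_marginal d \<mu>A \<mu>1" "copula_with_marginal d \<mu>A \<mu>2"
    and kernels: "markov_kernel_of d \<mu>A \<mu>1 K1" "markov_kernel_of d \<mu>A \<mu>2 K2"
  have prob: "prob_space \<mu>A"
    using assms(2) by (simp add: copula_measure_def)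
  have sets_\<mu>A: "sets \<mu>A = sets (cube_space (d - 1))"
    using assms(2) by (rule sets_copula_measure)
  have unit_kernels: "unit_kernel \<mu>A K1" "unit_kernel \<mu>A K2"
    by (rule unit_kernel_markov_kernel_of[OF sets_\<mu>A kernels(1)]
        unit_kernel_markov_kernel_of[OF sets_\<mu>A kernels(2)])+
  show "D_A1 \<mu>A K1 K2 =
      (\<integral>\<tau>. norm_A1 \<mu>A (\<lambda>x. cond_quantile K1 \<tau> x - cond_quantile K2 \<tau> x) \<partial>unit_lborel)"
    using prob unit_kernels by (rule D_A1_eq_integral_norm_A1_cond_quantile_diff)
  show "D_A1 \<mu>A K1 K2 \<le> 1 / 2"
    using prob unit_kernels integral_markov_kernel_atLeastAtMost[OF copulas(1) kernels(1)]
      integral_markov_kernel_atLeastAtMost[OF copulas(2) kernels(2)]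
    by (rule D_A1_le_half)
next
  show "\<exists>\<mu>1 \<mu>2 K1 K2.
          copula_with_marginal d \<mu>A \<mu>1 \<and> copula_with_marginal d \<mu>A \<mu>2 \<and>
          markov_kernel_of d \<mu>A \<mu>1 K1 \<and> markov_kernel_of d \<mu>A \<mu>2 K2 \<and>
          D_A1 \<mu>A K1 K2 = 1 / 2"
    using assms by (rule D_A1_attains_half)
qed

end
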